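(* Let $k\in\mathbb{Z}_{\geq2}$ and $j\in\mathbb{Z}_{\geq0}$. Then, as $n\to\infty$ (with implied constants depending on $k$ and $j$), \[ {}_k\omega_n(j)=\frac{e^{-1/n}}{j!\,n^j}+O\!\left(\frac{2^{r_k(n)-j}}{(r_k(n)-j)!}\right), \] and in particular \[ {}_k\omega_n(j)=\frac{1}{j!\,n^j}\left(1-\frac1n\right)+O\!\left(\frac{1}{n^{j+2}}\right). \]
   Context: For $k\in\mathbb{Z}_{\ge2}$, $n\in\mathbb{Z}_{\ge1}$, $r_k(n)=\frac1n\sum_{d\mid n}k^d\mu(n/d)$ ($\mu$ the Möbius function); $n\,r_k(n)$ is the degree of the $n$th dynatomic polynomial of $x^k+c$. $C_n\wr S_r=C_n^r\rtimes S_r$ acts on $B(n,r)=C_n\times\{1,\dots,r\}$ by $((\zeta_1,\dots,\zeta_r),\pi)\cdot(\zeta,i)=(\zeta_i\zeta,\pi(i))$; $\mathrm{Fix}(\sigma)$ is the fixed-point set of $\sigma$ in $B(n,r)$, and $\omega_{n,r}(j)=|\{\sigma\in C_n\wr S_r: |\mathrm{Fix}(\sigma)|=jn\}|/(r!\,n^r)$. Finally ${}_k\omega_n:=\omega_{n,r_k(n)}$. *)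

theory Defs
  imports "HOL-Analysis.Analysis" "HOL-Computational_Algebra.Squarefree" "HOL-Library.Landau_Symbols"
begin

definition moebius :: "nat \<Rightarrow> int" where
  "moebius m = (if squarefree m then (-1) ^ card (prime_factors m) else 0)"

text \<open>r_k(n) = (1/n) * sum over d dividing n of k^d * mu(n/d); this sum is always
  divisible by n (n > 0) and nonnegative, so r_k(n) is a natural number.\<close>
definition rk :: "nat \<Rightarrow> nat \<Rightarrow> nat" where
  "rk k n = nat ((\<Sum>d | d dvd n. int k ^ d * moebius (n div d)) div int n)"

text \<open>Wreath product C_n wr S_r, with C_n modelled as the additive group {0..<n}
  (integers mod n) and {1..r} modelled as {0..<r}.\<close>
definition wreath :: "nat \<Rightarrow> nat \<Rightarrow> ((nat \<Rightarrow> nat) \<times> (nat \<Rightarrow> nat)) set" where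
  "wreath n r = {(z, \<pi>). z \<in> {0..<r} \<rightarrow>\<^sub>E {0..<n} \<and> \<pi> permutes {0..<r}}"

definition Bset :: "nat \<Rightarrow> nat \<Rightarrow> (nat \<times> nat) set" where
  "Bset n r = {0..<n} \<times> {0..<r}"

definition wr_act :: "nat \<Rightarrow> ((nat \<Rightarrow> nat) \<times> (nat \<Rightarrow> nat)) \<Rightarrow> nat \<times> nat \<Rightarrow> nat \<times> nat" where
  "wr_act n \<sigma> x = ((fst \<sigma> (snd x) + fst x) mod n, snd \<sigma> (snd x))"

definition Fix :: "nat \<Rightarrow> nat \<Rightarrow> ((nat \<Rightarrow> nat) \<times> (nat \<Rightarrow> nat)) \<Rightarrow> (nat \<times> nat) set" where
  "Fix n r \<sigma> = {x \<in> Bset n r. wr_act n \<sigma> x = x}"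

definition omega :: "nat \<Rightarrow> nat \<Rightarrow> nat \<Rightarrow> real" where
  "omega n r j = real (card {\<sigma> \<in> wreath n r. card (Fix n r \<sigma>) = j * n})
                 / (fact r * real n ^ r)"

definition komega :: "nat \<Rightarrow> nat \<Rightarrow> nat \<Rightarrow> real" where
  "komega k n j = omega n (rk k n) j"

end

theory Submission
  imports Defs "HOL-Combinatorics.Permutations" "HOL-Real_Asymp.Real_Asymp"
begin

text \<open>
  An element \<open>((z\<^sub>i), \<pi>)\<close> of the wreath product fixes \<open>(\<zeta>, i)\<close> iff \<open>\<pi> i = i\<close> and \<open>z\<^sub>i = 0\<close>,
  so its fixed-point set is \<open>C\<^sub>n\<close> times the set of such "fixed coordinates", and
  \<open>|Fix \<sigma>| = j n\<close> means exactly \<open>j\<close> fixed coordinates. Choosing these and counting, by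
  inclusion--exclusion, the elements on the remaining \<open>r - j\<close> coordinates that have no
  fixed coordinate gives \<open>omega n r j = exp_poly (r - j) (-1/n) / (j! n^j)\<close>, a Taylor
  polynomial of \<open>exp (-1/n) / (j! n^j)\<close>. Both estimates are then bounds on the Taylor
  remainder of \<open>exp\<close>; the second needs \<open>r_k(n) > j\<close>, true for large \<open>n\<close> because
  \<open>n r_k(n) \<ge> k^n - k^(n div 2 + 1)\<close>.
\<close>

text \<open>The wreath product acting on an arbitrary finite index set \<open>I\<close>, so that
  inclusion--exclusion can range over subsets of the coordinates.\<close>

definition wreath_on :: "nat \<Rightarrow> 'a set \<Rightarrow> (('a \<Rightarrow> nat) \<times> ('a \<Rightarrow> 'a)) set" where
  "wreath_on n I = (I \<rightarrow>\<^sub>E {0..<n}) \<times> {\<pi>. \<pi> permutes I}"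

definition fixed_coords :: "'a set \<Rightarrow> ('a \<Rightarrow> nat) \<times> ('a \<Rightarrow> 'a) \<Rightarrow> 'a set" where
  "fixed_coords I \<sigma> = {i \<in> I. snd \<sigma> i = i \<and> fst \<sigma> i = 0}"

definition wreath_derangements :: "nat \<Rightarrow> 'a set \<Rightarrow> (('a \<Rightarrow> nat) \<times> ('a \<Rightarrow> 'a)) set" where
  "wreath_derangements n I = {\<sigma> \<in> wreath_on n I. fixed_coords I \<sigma> = {}}"

lemma finite_wreath_on: "finite I \<Longrightarrow> finite (wreath_on n I)"
  by (simp add: wreath_on_def finite_PiE finite_permutations)

lemma card_wreath_on: "finite I \<Longrightarrow> card (wreath_on n I) = fact (card I) * n ^ card I"
  by (simp add: wreath_on_def card_cartesian_product card_PiE card_permutations)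

lemma bij_betw_fixed_coords_eq_wreath_derangements:
  assumes "n > 0" "S \<subseteq> I"
  shows "bij_betw (\<lambda>(z, \<pi>). (restrict z (I - S), \<pi>))
           {\<sigma> \<in> wreath_on n I. fixed_coords I \<sigma> = S} (wreath_derangements n (I - S))"
proof (rule bij_betwI[where g = "\<lambda>(z, \<pi>). (\<lambda>i. if i \<in> S then 0 else z i, \<pi>)"])
  show "(\<lambda>(z, \<pi>). (restrict z (I - S), \<pi>)) \<in> {\<sigma> \<in> wreath_on n I. fixed_coords I \<sigma> = S}
      \<rightarrow> wreath_derangements n (I - S)"
  proof
    fix \<sigma> assume "\<sigma> \<in> {\<sigma> \<in> wreath_on n I. fixed_coords I \<sigma> = S}"
    then obtain z \<pi> where \<sigma>: "\<sigma> = (z, \<pi>)" "z \<in> I \<rightarrow>\<^sub>E {0..<n}" "\<pi> permutes I"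
      and S: "fixed_coords I (z, \<pi>) = S"
      by (auto simp: wreath_on_def)
    then have "\<pi> permutes I - S"
      unfolding permutes_def fixed_coords_def by auto
    with \<sigma> S show "(\<lambda>(z, \<pi>). (restrict z (I - S), \<pi>)) \<sigma> \<in> wreath_derangements n (I - S)"
      by (auto simp: wreath_derangements_def wreath_on_def fixed_coords_def)
  qed
  show "(\<lambda>(z, \<pi>). (\<lambda>i. if i \<in> S then 0 else z i, \<pi>)) \<in> wreath_derangements n (I - S)
      \<rightarrow> {\<sigma> \<in> wreath_on n I. fixed_coords I \<sigma> = S}"
  proof
    fix \<sigma> assume "\<sigma> \<in> wreath_derangements n (I - S)"
    then obtain z \<pi> where \<sigma>: "\<sigma> = (z, \<pi>)" "z \<in> I - S \<rightarrow>\<^sub>E {0..<n}" "\<pi> permutes I - S"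
      and no_fixed: "fixed_coords (I - S) (z, \<pi>) = {}"
      by (auto simp: wreath_derangements_def wreath_on_def)
    have "\<pi> permutes I" "\<forall>i\<in>S. \<pi> i = i"
      using permutes_subset[OF \<sigma>(3)] permutes_not_in[OF \<sigma>(3)] by auto
    with \<sigma> no_fixed assms
    show "(\<lambda>(z, \<pi>). (\<lambda>i. if i \<in> S then 0 else z i, \<pi>)) \<sigma> \<in> {\<sigma> \<in> wreath_on n I. fixed_coords I \<sigma> = S}"
      by (auto simp: wreath_on_def fixed_coords_def PiE_def extensional_def)
  qed
next
  fix \<sigma> assume "\<sigma> \<in> {\<sigma> \<in> wreath_on n I. fixed_coords I \<sigma> = S}"
  then show "(\<lambda>(z, \<pi>). (\<lambda>i. if i \<in> S then 0 else z i, \<pi>)) ((\<lambda>(z, \<pi>). (restrict z (I - S), \<pi>)) \<sigma>) = \<sigma>"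
    by (auto simp: wreath_on_def fixed_coords_def PiE_def extensional_def fun_eq_iff)
next
  fix \<sigma> assume "\<sigma> \<in> wreath_derangements n (I - S)"
  then show "(\<lambda>(z, \<pi>). (restrict z (I - S), \<pi>)) ((\<lambda>(z, \<pi>). (\<lambda>i. if i \<in> S then 0 else z i, \<pi>)) \<sigma>) = \<sigma>"
    by (auto simp: wreath_derangements_def wreath_on_def PiE_def extensional_def fun_eq_iff)
qed

lemma card_wreath_on_filter_fixed_coords:
  assumes "n > 0" "finite I"
  shows "card {\<sigma> \<in> wreath_on n I. P (fixed_coords I \<sigma>)}
           = (\<Sum>S | S \<subseteq> I \<and> P S. card (wreath_derangements n (I - S)))"
proof -
  let ?A = "{\<sigma> \<in> wreath_on n I. P (fixed_coords I \<sigma>)}"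
  have "finite ?A"
    using assms(2) by (simp add: finite_wreath_on)
  moreover have "finite {S. S \<subseteq> I \<and> P S}"
    using assms(2) by (simp add: finite_subset[of _ "Pow I"])
  moreover have "fixed_coords I ` ?A \<subseteq> {S. S \<subseteq> I \<and> P S}"
    by (auto simp: fixed_coords_def)
  ultimately have "card ?A = (\<Sum>S | S \<subseteq> I \<and> P S. card {\<sigma> \<in> ?A. fixed_coords I \<sigma> = S})"
    using sum.group[of ?A "{S. S \<subseteq> I \<and> P S}" "fixed_coords I" "\<lambda>_. 1::nat"] by simp
  also have "\<dots> = (\<Sum>S | S \<subseteq> I \<and> P S. card (wreath_derangements n (I - S)))"
  proof (intro sum.cong refl)
    fix S assume "S \<in> {S. S \<subseteq> I \<and> P S}"
    then have "{\<sigma> \<in> ?A. fixed_coords I \<sigma> = S} = {\<sigma> \<in> wreath_on n I. fixed_coords I \<sigma> = S}"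
      and "S \<subseteq> I"
      by auto
    then show "card {\<sigma> \<in> ?A. fixed_coords I \<sigma> = S} = card (wreath_derangements n (I - S))"
      using bij_betw_same_card[OF bij_betw_fixed_coords_eq_wreath_derangements[OF assms(1)]] by simp
  qed
  finally show ?thesis .
qed

lemma card_wreath_on_eq_sum_wreath_derangements:
  assumes "n > 0" "finite I"
  shows "card (wreath_on n I) = (\<Sum>T\<in>Pow I. card (wreath_derangements n T))"
proof -
  have "card (wreath_on n I) = (\<Sum>S\<in>Pow I. card (wreath_derangements n (I - S)))"
    using card_wreath_on_filter_fixed_coords[OF assms, of "\<lambda>_. True"] by (simp add: Pow_def)
  also have "\<dots> = (\<Sum>T\<in>Pow I. card (wreath_derangements n T))"
    by (rule sum.reindex_bij_betw) (rule bij_betwI[where g = "\<lambda>S. I - S"]; auto)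
  finally show ?thesis .
qed

lemma sum_Pow_card:
  fixes h :: "nat \<Rightarrow> 'a::comm_semiring_1"
  assumes "finite S"
  shows "(\<Sum>T\<in>Pow S. h (card T)) = (\<Sum>t\<le>card S. of_nat (card S choose t) * h t)"
proof -
  have "(\<Sum>T\<in>Pow S. h (card T)) = (\<Sum>t\<le>card S. \<Sum>T\<in>{T \<in> Pow S. card T = t}. h (card T))"
    by (rule sum.group[symmetric]) (auto simp: assms card_mono)
  also have "\<dots> = (\<Sum>t\<le>card S. of_nat (card S choose t) * h t)"
    using n_subsets[OF assms] by (simp add: Pow_def)
  finally show ?thesis .
qed

definition exp_poly :: "nat \<Rightarrow> real \<Rightarrow> real" where
  "exp_poly m x = (\<Sum>i\<le>m. x ^ i / fact i)"

lemma alternating_binomial_sum_fact_power: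
  fixes c :: real
  assumes "c \<noteq> 0"
  shows "(\<Sum>t\<le>m. of_nat (m choose t) * (-1) ^ (m - t) * (fact t * c ^ t))
           = fact m * c ^ m * exp_poly m (-1 / c)"
proof -
  have "(\<Sum>t\<le>m. of_nat (m choose t) * (-1) ^ (m - t) * (fact t * c ^ t))
      = (\<Sum>t\<le>m. fact m * c ^ m * ((-1 / c) ^ (m - t) / fact (m - t)))"
  proof (intro sum.cong refl)
    fix t assume "t \<in> {..m}"
    then have t: "t \<le> m" by simp
    have "c ^ m = c ^ t * c ^ (m - t)"
      using t by (simp flip: power_add)
    moreover have "c ^ (m - t) * (-1 / c) ^ (m - t) = (-1) ^ (m - t)"
      using assms by (simp flip: power_mult_distrib)
    ultimately show "of_nat (m choose t) * (-1) ^ (m - t) * (fact t * c ^ t)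
        = fact m * c ^ m * ((-1 / c) ^ (m - t) / fact (m - t))"
      using assms by (simp add: binomial_fact[OF t] field_simps)
  qed
  also have "\<dots> = fact m * c ^ m * (\<Sum>t\<le>m. (-1 / c) ^ (m - t) / fact (m - t))"
    by (simp add: sum_distrib_left)
  also have "\<dots> = fact m * c ^ m * exp_poly m (-1 / c)"
    using sum.nat_diff_reindex[of "\<lambda>i. (-1 / c) ^ i / fact i" "Suc m"]
    by (simp add: exp_poly_def lessThan_Suc_atMost)
  finally show ?thesis .
qed

lemma card_wreath_derangements:
  assumes "n > 0" "finite S"
  shows "real (card (wreath_derangements n S))
           = fact (card S) * real n ^ card S * exp_poly (card S) (-1 / real n)"
proof -
  have "real (card (wreath_derangements n S))
      = (\<Sum>T\<in>Pow S. (-1) ^ (card S - card T) * real (card (wreath_on n T)))"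
    by (rule inclusion_exclusion_mobius)
       (simp_all add: card_wreath_on_eq_sum_wreath_derangements[OF assms(1)] assms(2))
  also have "\<dots> = (\<Sum>T\<in>Pow S. (-1) ^ (card S - card T) * (fact (card T) * real n ^ card T))"
    using assms(2) by (intro sum.cong refl) (simp add: card_wreath_on finite_subset)
  also have "\<dots> = (\<Sum>t\<le>card S. of_nat (card S choose t) * ((-1) ^ (card S - t) * (fact t * real n ^ t)))"
    by (rule sum_Pow_card[OF assms(2)])
  also have "\<dots> = fact (card S) * real n ^ card S * exp_poly (card S) (-1 / real n)"
    using alternating_binomial_sum_fact_power[of "real n" "card S"] assms(1) by (simp add: mult.assoc)
  finally show ?thesis .
qed

lemma card_wreath_on_card_fixed_coords:
  assumes "n > 0" "finite I"
  shows "real (card {\<sigma> \<in> wreath_on n I. card (fixed_coords I \<sigma>) = j})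
           = real (card I choose j) * (fact (card I - j) * real n ^ (card I - j)
               * exp_poly (card I - j) (-1 / real n))"
proof -
  have "real (card {\<sigma> \<in> wreath_on n I. card (fixed_coords I \<sigma>) = j})
      = (\<Sum>S | S \<subseteq> I \<and> card S = j. real (card (wreath_derangements n (I - S))))"
    using card_wreath_on_filter_fixed_coords[OF assms, of "\<lambda>S. card S = j"] by simp
  also have "\<dots> = (\<Sum>S | S \<subseteq> I \<and> card S = j.
      fact (card I - j) * real n ^ (card I - j) * exp_poly (card I - j) (-1 / real n))"
    using assms by (intro sum.cong refl)
      (auto simp: card_wreath_derangements card_Diff_subset finite_subset)
  finally show ?thesis
    by (simp add: n_subsets[OF assms(2)])
qed

lemma wreath_eq_wreath_on: "wreath n r = wreath_on n {0..<r}"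
  by (auto simp: wreath_def wreath_on_def)

lemma add_mod_eq_self_iff:
  fixes a b n :: nat
  assumes "a < n" "b < n"
  shows "(a + b) mod n = b \<longleftrightarrow> a = 0"
proof -
  have "(a + b) mod n = b mod n \<longleftrightarrow> n dvd a"
    using mod_eq_dvd_iff_nat[of b "a + b" n] by simp
  with assms show ?thesis
    by (auto dest: nat_dvd_not_less)
qed

lemma Fix_eq_times_fixed_coords:
  assumes "\<sigma> \<in> wreath n r"
  shows "Fix n r \<sigma> = {0..<n} \<times> fixed_coords {0..<r} \<sigma>"
proof -
  have "fst \<sigma> i < n" if "i < r" for i
    using assms that by (auto simp: wreath_def)
  then show ?thesis
    using add_mod_eq_self_iff
    by (auto simp: Fix_def Bset_def wr_act_def fixed_coords_def)
qed

lemma omega_eq_exp_poly: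
  assumes "n > 0"
  shows "omega n r j
           = (if j \<le> r then exp_poly (r - j) (-1 / real n) / (fact j * real n ^ j) else 0)"
proof -
  have "card (Fix n r \<sigma>) = j * n \<longleftrightarrow> card (fixed_coords {0..<r} \<sigma>) = j" if "\<sigma> \<in> wreath n r" for \<sigma>
    using assms by (simp add: Fix_eq_times_fixed_coords[OF that] card_cartesian_product)
  then have "{\<sigma> \<in> wreath n r. card (Fix n r \<sigma>) = j * n}
      = {\<sigma> \<in> wreath_on n {0..<r}. card (fixed_coords {0..<r} \<sigma>) = j}"
    by (auto simp: wreath_eq_wreath_on)
  then have "real (card {\<sigma> \<in> wreath n r. card (Fix n r \<sigma>) = j * n})
      = real (r choose j) * (fact (r - j) * real n ^ (r - j) * exp_poly (r - j) (-1 / real n))"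
    using card_wreath_on_card_fixed_coords[OF assms, of "{0..<r}" j] by simp
  moreover have "real n ^ r = real n ^ j * real n ^ (r - j)" if "j \<le> r"
    using that by (simp flip: power_add)
  ultimately show ?thesis
    using assms by (auto simp: omega_def binomial_fact field_simps)
qed

lemma abs_exp_minus_exp_poly_le:
  fixes x :: real
  assumes "0 \<le> x" "x \<le> 1/2"
  shows "\<bar>exp (-x) - exp_poly m (-x)\<bar> \<le> 2 * x ^ (m + 1) / fact (m + 1)"
proof -
  define f where "f = (\<lambda>i. (-x) ^ i / fact i :: real)"
  define c where "c = x ^ (m + 1) / fact (m + 1)"
  have "f sums exp (-x)"
    using exp_converges[of "-x"] by (simp add: f_def divide_inverse mult.commute)
  then have tail: "(\<lambda>i. f (i + Suc m)) sums (exp (-x) - exp_poly m (-x))"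
    using sums_iff_shift'[of f "Suc m"] by (simp add: f_def exp_poly_def lessThan_Suc_atMost)
  have geometric: "(\<lambda>i. c * x ^ i) sums (c * (1 / (1 - x)))"
    using assms by (intro sums_mult geometric_sums) simp
  have "\<bar>f (i + Suc m)\<bar> \<le> c * x ^ i" for i
  proof -
    have "\<bar>f (i + Suc m)\<bar> = x ^ (i + Suc m) / fact (i + Suc m)"
      using assms by (simp add: f_def power_abs abs_mult)
    also have "\<dots> \<le> x ^ (i + Suc m) / fact (Suc m)"
      using assms by (intro divide_left_mono fact_mono) auto
    also have "\<dots> = c * x ^ i"
      by (simp add: c_def power_add field_simps)
    finally show ?thesis .
  qed
  then have "exp (-x) - exp_poly m (-x) \<le> c * (1 / (1 - x))"
    and "-(exp (-x) - exp_poly m (-x)) \<le> c * (1 / (1 - x))"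
    by (intro sums_le[OF _ tail geometric] sums_le[OF _ sums_minus[OF tail] geometric];
        simp add: abs_le_iff)+
  then have "\<bar>exp (-x) - exp_poly m (-x)\<bar> \<le> c * (1 / (1 - x))"
    by linarith
  also have "\<dots> \<le> c * 2"
    using assms by (intro mult_left_mono) (auto simp: c_def field_simps)
  finally show ?thesis
    by (simp add: c_def mult_ac)
qed

lemma omega_exp_approx:
  assumes "n \<ge> 2"
  shows "\<bar>omega n r j - exp (-1 / real n) / (fact j * real n ^ j)\<bar> \<le> 2 ^ (r - j) / fact (r - j)"
proof -
  define x where "x = 1 / real n"
  have x: "0 \<le> x" "x \<le> 1/2"
    using assms by (auto simp: x_def field_simps)
  have "1 * 1 \<le> fact j * real n ^ j"
    using assms by (intro mult_mono) auto
  then have F: "1 \<le> fact j * real n ^ j"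
    by simp
  show ?thesis
  proof (cases "j \<le> r")
    case True
    have "\<bar>omega n r j - exp (-1 / real n) / (fact j * real n ^ j)\<bar>
        = \<bar>exp (-x) - exp_poly (r - j) (-x)\<bar> / (fact j * real n ^ j)"
      using True assms by (simp add: omega_eq_exp_poly x_def abs_minus_commute flip: diff_divide_distrib)
    also have "\<dots> \<le> \<bar>exp (-x) - exp_poly (r - j) (-x)\<bar>"
      using F by (simp add: divide_le_eq mult_le_cancel_left1 mult_left_le)
    also have "\<dots> \<le> 2 * x ^ (r - j + 1) / fact (r - j + 1)"
      using x by (rule abs_exp_minus_exp_poly_le)
    also have "\<dots> \<le> 1 / fact (r - j + 1)"
      using x power_decreasing[of 1 "r - j + 1" x] by (intro divide_right_mono) auto
    also have "\<dots> \<le> 1 / fact (r - j)"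
      by (intro divide_left_mono fact_mono) auto
    also have "\<dots> \<le> 2 ^ (r - j) / fact (r - j)"
      by (intro divide_right_mono) auto
    finally show ?thesis .
  next
    case False
    \<comment> \<open>then \<open>omega n r j = 0\<close> and, by truncated subtraction, the bound is \<open>2 ^ 0 / fact 0 = 1\<close>\<close>
    have "exp (-x) \<le> fact j * real n ^ j"
      using x order_trans[OF _ F, of "exp (-x)"] by simp
    then have "exp (-x) / (fact j * real n ^ j) \<le> 1"
      using F by (simp add: divide_le_eq)
    with False assms show ?thesis
      by (simp add: omega_eq_exp_poly x_def)
  qed
qed

lemma omega_linear_approx:
  assumes "n \<ge> 2" "j < r"
  shows "\<bar>omega n r j - (1 - 1 / real n) / (fact j * real n ^ j)\<bar> \<le> 4 / real n ^ (j + 2)"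
proof -
  define x where "x = 1 / real n"
  have x: "0 \<le> x" "x \<le> 1/2"
    using assms by (auto simp: x_def field_simps)
  have "\<bar>exp (-x) - exp_poly (r - j) (-x)\<bar> \<le> 2 * x ^ (r - j + 1) / fact (r - j + 1)"
    using x by (rule abs_exp_minus_exp_poly_le)
  also have "\<dots> \<le> 2 * x ^ 2"
    using assms x power_decreasing[of 2 "r - j + 1" x]
    by (intro order_trans[OF divide_left_mono[OF fact_ge_1]] mult_left_mono) auto
  finally have "\<bar>exp_poly (r - j) (-x) - exp_poly 1 (-x)\<bar> \<le> 4 * x ^ 2"
    using abs_exp_minus_exp_poly_le[OF x, of 1] by (simp add: power2_eq_square)
  moreover have "exp_poly 1 (-x) = 1 - x"
    by (simp add: exp_poly_def)
  moreover have "real n ^ j \<le> fact j * real n ^ j"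
    by (simp add: mult_le_cancel_right1)
  ultimately have "\<bar>exp_poly (r - j) (-x) - (1 - x)\<bar> / (fact j * real n ^ j) \<le> 4 * x ^ 2 / real n ^ j"
    using assms by (intro frac_le) auto
  then show ?thesis
    using assms by (simp add: omega_eq_exp_poly x_def power_add power2_eq_square field_simps
        flip: diff_divide_distrib)
qed

lemma sum_power_less_power:
  fixes k :: int
  assumes "k \<ge> 2"
  shows "(\<Sum>d<N. k ^ d) < k ^ N"
proof (induction N)
  case (Suc N)
  then have "(\<Sum>d<Suc N. k ^ d) < 2 * k ^ N"
    by simp
  also have "\<dots> \<le> k * k ^ N"
    using assms by (intro mult_right_mono) auto
  finally show ?case
    by simp
qed simp

lemma proper_divisor_le_half:
  fixes d n :: nat
  assumes "n > 0" "d dvd n" "d \<noteq> n"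
  shows "d \<le> n div 2"
proof -
  obtain e where e: "n = d * e"
    using assms(2) by blast
  with assms have "e \<noteq> 0" "e \<noteq> 1"
    by auto
  then have "d * 2 \<le> n"
    using e by (simp add: mult_le_mono2)
  then show ?thesis
    by simp
qed

lemma moebius_sum_ge:
  assumes "k \<ge> 2" "n > 0"
  shows "int k ^ n - int k ^ (n div 2 + 1) \<le> (\<Sum>d | d dvd n. int k ^ d * moebius (n div d))"
proof -
  define D where "D = {d. d dvd n \<and> d \<noteq> n}"
  have "finite D"
    using assms(2) by (simp add: D_def)
  have "{d. d dvd n} = insert n D" "n \<notin> D"
    by (auto simp: D_def)
  with \<open>finite D\<close> have "(\<Sum>d | d dvd n. int k ^ d * moebius (n div d))
      = int k ^ n + (\<Sum>d\<in>D. int k ^ d * moebius (n div d))"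
    using assms(2) by (simp add: moebius_def)
  moreover have "- (\<Sum>d\<in>D. int k ^ d) \<le> (\<Sum>d\<in>D. int k ^ d * moebius (n div d))"
  proof -
    have "- (int k ^ d) \<le> int k ^ d * moebius (n div d)" for d
    proof -
      have "\<bar>moebius (n div d)\<bar> \<le> 1"
        by (simp add: moebius_def)
      then have "\<bar>int k ^ d * moebius (n div d)\<bar> \<le> int k ^ d"
        by (simp add: abs_mult mult_left_le)
      then show ?thesis
        by linarith
    qed
    then show ?thesis
      by (simp add: sum_mono flip: sum_negf)
  qed
  moreover have "(\<Sum>d\<in>D. int k ^ d) \<le> (\<Sum>d<n div 2 + 1. int k ^ d)"
    using proper_divisor_le_half[OF assms(2)] by (intro sum_mono2) (auto simp: D_def less_Suc_eq_le)
  moreover have "(\<Sum>d<n div 2 + 1. int k ^ d) < int k ^ (n div 2 + 1)"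
    using assms(1) by (intro sum_power_less_power) simp
  ultimately show ?thesis
    by linarith
qed

lemma two_power_le_moebius_sum:
  assumes "k \<ge> 2" "n \<ge> 4"
  shows "2 ^ n \<le> 2 * (\<Sum>d | d dvd n. int k ^ d * moebius (n div d))"
proof -
  obtain n' where n: "n = Suc n'"
    using assms(2) by (cases n) auto
  have "int k ^ (n div 2 + 1) \<le> int k ^ n'"
    using assms n by (intro power_increasing) auto
  moreover have "2 * int k ^ n' \<le> int k ^ n"
    using assms(1) n by (simp add: mult_right_mono)
  moreover have "(2::int) ^ n' \<le> int k ^ n'"
    using assms(1) by (intro power_mono) auto
  moreover have "int k ^ n - int k ^ (n div 2 + 1) \<le> (\<Sum>d | d dvd n. int k ^ d * moebius (n div d))"
    using assms by (intro moebius_sum_ge) auto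
  moreover have "(2::int) ^ n = 2 * 2 ^ n'"
    using n by simp
  ultimately show ?thesis
    by linarith
qed

lemma filterlim_rk_at_top:
  assumes "k \<ge> 2"
  shows "filterlim (rk k) at_top at_top"
  unfolding filterlim_at_top
proof
  fix m
  have "eventually (\<lambda>n. real (2 * m) * real n \<le> 2 ^ n) at_top"
    by real_asymp
  then show "eventually (\<lambda>n. m \<le> rk k n) at_top"
    using eventually_ge_at_top[of 4]
  proof eventually_elim
    case (elim n)
    let ?S = "\<Sum>d | d dvd n. int k ^ d * moebius (n div d)"
    have "real (2 * m * n) \<le> real (2 ^ n)"
      using elim(1) by simp
    then have "2 * int m * int n \<le> 2 ^ n"
      by (metis of_nat_le_iff of_nat_mult of_nat_numeral of_nat_power)
    then have "int m * int n \<le> ?S"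
      using two_power_le_moebius_sum[OF assms elim(2)] by linarith
    then have "int m * int n div int n \<le> ?S div int n"
      by (rule zdiv_mono1) (use elim(2) in simp)
    then show ?case
      using elim(2) unfolding rk_def by simp
  qed
qed

theorem mainTheorem5:
  fixes k j :: nat
  assumes "k \<ge> 2"
  shows "((\<lambda>n. komega k n j - exp (- 1 / real n) / (fact j * real n ^ j))
           \<in> O(\<lambda>n. 2 ^ (rk k n - j) / fact (rk k n - j)))
         \<and> ((\<lambda>n. komega k n j - (1 - 1 / real n) / (fact j * real n ^ j))
           \<in> O(\<lambda>n. 1 / real n ^ (j + 2)))"
proof
  have large: "eventually (\<lambda>n. 2 \<le> n \<and> j < rk k n) at_top"
    using eventually_conj[OF eventually_ge_at_top
        filterlim_rk_at_top[OF assms, unfolded filterlim_at_top, rule_format, of "Suc j"]]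
    by (simp add: Suc_le_eq)
  have "norm (komega k n j - exp (- 1 / real n) / (fact j * real n ^ j))
          \<le> 1 * norm (2 ^ (rk k n - j) / fact (rk k n - j) :: real)"
    and "norm (komega k n j - (1 - 1 / real n) / (fact j * real n ^ j))
          \<le> 4 * norm (1 / real n ^ (j + 2))"
    if "2 \<le> n \<and> j < rk k n" for n
    using that omega_exp_approx[of n "rk k n" j] omega_linear_approx[of n j "rk k n"]
    by (simp_all add: komega_def)
  with large show "(\<lambda>n. komega k n j - exp (- 1 / real n) / (fact j * real n ^ j))
      \<in> O(\<lambda>n. 2 ^ (rk k n - j) / fact (rk k n - j))"
    and "(\<lambda>n. komega k n j - (1 - 1 / real n) / (fact j * real n ^ j))
      \<in> O(\<lambda>n. 1 / real n ^ (j + 2))"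
    by (blast intro: eventually_mono)+
qed

end
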